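(* Let $p$ be a prime number and let $x,y,z\in\mathbb{N}$ with $x\le y\le z$ satisfy $\frac{4}{p}=\frac{1}{x}+\frac{1}{y}+\frac{1}{z}$. Then $\gcd(x,p)=1$.
   Context: $\mathbb{N}$ denotes the positive integers. *)

theory Defs
  imports "HOL-Analysis.Analysis"
begin

end

theory Submission
  imports Defs
begin

text \<open>Since x is the smallest denominator, 4/p \<le> 3/x, so x < p and the prime p cannot divide x.\<close>

lemma coprime_prime_if_less:
  fixes p x :: nat
  assumes "prime p" and "0 < x" and "x < p"
  shows "gcd x p = 1"
proof -
  have "\<not> p dvd x" using assms(2,3) by (auto dest: dvd_imp_le)
  then show ?thesis
    using assms(1) by (simp add: prime_imp_coprime coprime_commute)
qed

lemma smallest_denominator_bound:
  fixes p x y z :: nat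
  assumes "0 < p" and "0 < x" and "x \<le> y" and "x \<le> z"
    and "(4::real) / real p = 1 / real x + 1 / real y + 1 / real z"
  shows "4 * x \<le> 3 * p"
proof -
  have "1 / real y \<le> 1 / real x" "1 / real z \<le> 1 / real x"
    using assms(2-4) by (simp_all add: frac_le)
  then have "(4::real) / real p \<le> 3 / real x" using assms(5) by simp
  then have "4 * real x \<le> 3 * real p" using assms(1,2) by (simp add: field_simps)
  then show ?thesis by linarith
qed

theorem lemma2:
  fixes p x y z :: nat
  assumes "prime p"
    and "0 < x" and "0 < y" and "0 < z"
    and "x \<le> y" and "y \<le> z"
    and "(4::real) / real p = 1 / real x + 1 / real y + 1 / real z"
  shows "gcd x p = 1"
proof -
  have "0 < p" using assms(1) prime_gt_0_nat by blast
  moreover have "x \<le> z" using assms(5,6) by linarith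
  ultimately have "4 * x \<le> 3 * p"
    using smallest_denominator_bound assms(2,5,7) by blast
  then have "x < p" using \<open>0 < p\<close> by linarith
  then show ?thesis using coprime_prime_if_less assms(1,2) by blast
qed

end
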